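(* Let $G=(V,E)$ be a directed graph on $n$ nodes in which every node has a self-loop, let $P$ be an $n\times n$ right stochastic matrix supported on the edges of $G$, let $D$ be diagonal with entries $D_{uu}=p_{uu'}\in[0,1]$, and let $\tilde P=(\mathbf I_n-D)P$. Write $p^{(t)}_{uv}=(P^t)_{uv}$ and $\tilde p^{(t)}_{uv}=(\tilde P^t)_{uv}$. Then for all $u,v\in V$ and every integer $t\ge 1$, $$(1-p_{uu'})\Big(\max_{w\in V}(1-p_{ww'})\Big)^{t-1}p^{(t)}_{uv}\;\ge\;\tilde p^{(t)}_{uv}\;\ge\;(1-p_{uu'})\Big(\min_{w\in V}(1-p_{ww'})\Big)^{t-1}p^{(t)}_{uv}.$$
   Context: $p_{uu'}$ is interpreted as the probability that a random walker at $u$ is absorbed (moves to an auxiliary absorbing node $u'$); $\tilde p^{(t)}_{uv}$ is the probability that a walker started at $u$ is at $v$ (not yet absorbed) after $t$ steps. *)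

theory Defs
  imports "HOL-Analysis.Analysis"
begin

definition right_stochastic :: "real^'n^'n \<Rightarrow> bool" where
  "right_stochastic P \<longleftrightarrow> (\<forall>i j. P $ i $ j \<ge> 0) \<and> (\<forall>i. (\<Sum>j\<in>UNIV. P $ i $ j) = 1)"

fun mat_pow :: "real^'n^'n \<Rightarrow> nat \<Rightarrow> real^'n^'n" where
  "mat_pow A 0 = mat 1"
| "mat_pow A (Suc k) = mat_pow A k ** A"

end

theory Submission
  imports Defs
begin

text \<open>
  The matrix \<open>(I - D) P\<close> is \<open>P\<close> with row \<open>w\<close> scaled by \<open>c w = 1 - p_ww'\<close>. Hence
  entry \<open>(u, v)\<close> of its \<open>t\<close>-th power sums, over the walks \<open>u = w_0, ..., w_t = v\<close>,
  the \<open>P\<close>-weight of the walk times \<open>c w_0 * ... * c w_(t-1)\<close>. The first factor is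
  exactly \<open>c u\<close> and each of the other \<open>t - 1\<close> lies between \<open>min c\<close> and \<open>max c\<close>.
\<close>

lemma mat_pow_Suc_entry:
  "mat_pow A (Suc k) $ u $ v = (\<Sum>w\<in>UNIV. mat_pow A k $ u $ w * A $ w $ v)"
  by (simp add: matrix_matrix_mult_def)

lemma mat_pow_Suc_0 [simp]: "mat_pow A (Suc 0) = A"
  by simp

declare mat_pow.simps(2) [simp del]

lemma mat_pow_nonneg:
  fixes P :: "real^'n::finite^'n"
  assumes "\<forall>i j. 0 \<le> P $ i $ j"
  shows "0 \<le> mat_pow P k $ i $ j"
proof (induction k arbitrary: j)
  case 0
  then show ?case by (simp add: mat_def)
next
  case (Suc k)
  then show ?case using assms by (simp add: mat_pow_Suc_entry sum_nonneg)
qed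

lemma diagonal_matrix_mult_entry:
  fixes P :: "real^'n::finite^'n"
  shows "((\<chi> i j. if i = j then d i else 0) ** P) $ i $ j = d i * P $ i $ j"
  by (simp add: matrix_matrix_mult_def if_distrib if_distribR cong: if_cong)

lemma mat_pow_row_scaled_le:
  fixes P :: "real^'n::finite^'n"
  assumes P_nonneg: "\<forall>i j. 0 \<le> P $ i $ j"
    and c_nonneg: "\<And>w. 0 \<le> c w"
    and c_le: "\<And>w. c w \<le> b"
  shows "mat_pow (\<chi> i j. c i * P $ i $ j) (Suc k) $ u $ v \<le> c u * b ^ k * mat_pow P (Suc k) $ u $ v"
proof (induction k arbitrary: v)
  case 0
  then show ?case by simp
next
  case (Suc k)
  let ?Q = "\<chi> i j. c i * P $ i $ j :: real^'n^'n"
  have "mat_pow ?Q (Suc k) $ u $ w * (c w * P $ w $ v)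
      \<le> (c u * b ^ k * mat_pow P (Suc k) $ u $ w) * (b * P $ w $ v)" for w
  proof (rule mult_mono[OF Suc.IH])
    show "c w * P $ w $ v \<le> b * P $ w $ v"
      using c_le P_nonneg by (simp add: mult_right_mono)
    show "0 \<le> c u * b ^ k * mat_pow P (Suc k) $ u $ w"
      using c_nonneg[of u] c_le[of u] mat_pow_nonneg[OF P_nonneg] by simp
    show "0 \<le> c w * P $ w $ v"
      using c_nonneg P_nonneg by simp
  qed
  then have "mat_pow ?Q (Suc (Suc k)) $ u $ v
      \<le> (\<Sum>w\<in>UNIV. (c u * b ^ k * mat_pow P (Suc k) $ u $ w) * (b * P $ w $ v))"
    unfolding mat_pow_Suc_entry[of ?Q "Suc k"] by (simp add: sum_mono)
  also have "\<dots> = c u * b ^ Suc k * mat_pow P (Suc (Suc k)) $ u $ v"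
    by (simp add: mat_pow_Suc_entry[of P "Suc k"] sum_distrib_left algebra_simps)
  finally show ?case .
qed

lemma mat_pow_row_scaled_ge:
  fixes P :: "real^'n::finite^'n"
  assumes P_nonneg: "\<forall>i j. 0 \<le> P $ i $ j"
    and b_nonneg: "0 \<le> b"
    and b_le: "\<And>w. b \<le> c w"
  shows "c u * b ^ k * mat_pow P (Suc k) $ u $ v \<le> mat_pow (\<chi> i j. c i * P $ i $ j) (Suc k) $ u $ v"
proof (induction k arbitrary: v)
  case 0
  then show ?case by simp
next
  case (Suc k)
  let ?Q = "\<chi> i j. c i * P $ i $ j :: real^'n^'n"
  have Q_nonneg: "\<forall>i j. 0 \<le> ?Q $ i $ j"
    using P_nonneg b_nonneg b_le by (simp add: order_trans[OF b_nonneg])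
  have "(c u * b ^ k * mat_pow P (Suc k) $ u $ w) * (b * P $ w $ v)
      \<le> mat_pow ?Q (Suc k) $ u $ w * (c w * P $ w $ v)" for w
  proof (rule mult_mono[OF Suc.IH])
    show "b * P $ w $ v \<le> c w * P $ w $ v"
      using b_le P_nonneg by (simp add: mult_right_mono)
    show "0 \<le> mat_pow ?Q (Suc k) $ u $ w"
      using mat_pow_nonneg[OF Q_nonneg] by blast
    show "0 \<le> b * P $ w $ v"
      using b_nonneg P_nonneg by simp
  qed
  then have "(\<Sum>w\<in>UNIV. (c u * b ^ k * mat_pow P (Suc k) $ u $ w) * (b * P $ w $ v))
      \<le> mat_pow ?Q (Suc (Suc k)) $ u $ v"
    unfolding mat_pow_Suc_entry[of ?Q "Suc k"] by (simp add: sum_mono)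
  moreover have "(\<Sum>w\<in>UNIV. (c u * b ^ k * mat_pow P (Suc k) $ u $ w) * (b * P $ w $ v))
      = c u * b ^ Suc k * mat_pow P (Suc (Suc k)) $ u $ v"
    by (simp add: mat_pow_Suc_entry[of P "Suc k"] sum_distrib_left algebra_simps)
  ultimately show ?case by simp
qed

theorem lemma2:
  fixes E :: "('n::finite \<times> 'n) set"
    and P :: "real^'n^'n"
    and a :: "'n \<Rightarrow> real"
  assumes self_loops: "\<forall>w. (w, w) \<in> E"
    and stoch: "right_stochastic P"
    and support: "\<forall>i j. P $ i $ j \<noteq> 0 \<longrightarrow> (i, j) \<in> E"
    and a_range: "\<forall>w. 0 \<le> a w \<and> a w \<le> 1"
    and t_ge: "t \<ge> 1"
  defines "Pt \<equiv> (mat 1 - (\<chi> i j. if i = j then a i else 0) :: real^'n^'n) ** P"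
  shows "(1 - a u) * (Max (range (\<lambda>w. 1 - a w))) ^ (t - 1) * mat_pow P t $ u $ v
           \<ge> mat_pow Pt t $ u $ v
       \<and> mat_pow Pt t $ u $ v
           \<ge> (1 - a u) * (Min (range (\<lambda>w. 1 - a w))) ^ (t - 1) * mat_pow P t $ u $ v"
proof -
  define c where "c w = 1 - a w" for w
  have P_nonneg: "\<forall>i j. 0 \<le> P $ i $ j"
    using stoch by (simp add: right_stochastic_def)
  have c_nonneg: "0 \<le> c w" for w
    using a_range by (simp add: c_def)
  have I_minus_D: "mat 1 - (\<chi> i j. if i = j then a i else 0) = (\<chi> i j. if i = j then c i else (0::real))"
    by (simp add: vec_eq_iff mat_def c_def)
  have Pt_eq: "Pt = (\<chi> i j. c i * P $ i $ j)"
    unfolding Pt_def I_minus_D by (simp add: vec_eq_iff diagonal_matrix_mult_entry)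
  obtain k where t: "t = Suc k"
    using t_ge by (cases t) auto
  have "mat_pow Pt t $ u $ v \<le> c u * Max (range c) ^ k * mat_pow P t $ u $ v"
    unfolding Pt_eq t by (rule mat_pow_row_scaled_le[OF P_nonneg c_nonneg]) simp
  moreover have "c u * Min (range c) ^ k * mat_pow P t $ u $ v \<le> mat_pow Pt t $ u $ v"
    unfolding Pt_eq t
    by (rule mat_pow_row_scaled_ge[OF P_nonneg]) (use c_nonneg in auto)
  ultimately show ?thesis
    unfolding t c_def[abs_def] by simp
qed

end
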